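(* Let $f:\mathcal{P}_2(H)\to U$ and $X_0\in L^2(\Omega,H)$ with $\mu_0=\mathcal{L}(X_0)=\sum_{k=1}^Np_k\delta_{x_k}$, $x_1,\dots,x_N\in H$ distinct, $p_k>0$, $\sum_kp_k=1$. Assume the lift $\hat f(X)=f(\mathcal{L}(X))$ is Fréchet differentiable at $X_0$ with $D\hat f(X_0)\in\Lambda_2^{\mathbb{P}}(H,U)$; let $m(A)u:=D\hat f(X_0)(u\mathbf{1}_A)$ and $m_{\mu_0}(B):=m(\{X_0\in B\})$ for Borel $B\subset H$. Then $$\frac{dm_{\mu_0}}{d\mu_0}(x):=\sum_{k=1}^N\frac{m_{\mu_0}(\{x_k\})}{\mu_0(\{x_k\})}\mathbf{1}_{\{x_k\}}(x)$$ satisfies $\mathbb{E}\big[\mathbf{1}_A\frac{dm_{\mu_0}}{d\mu_0}(X_0)\big]=m(A)$ for all $A\in\mathcal{F}$ (Bochner integral in $L(H,U)$).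
   Context: $(\Omega,\mathcal{F},\mathbb{P})$ is a complete atomless probability space, $\Omega$ Polish with Borel $\sigma$-field; $H,U$ separable real Hilbert spaces; $L(H,U)$ with operator norm. For bounded linear $L:L^2(\Omega,H)\to U$, $|\!|\!|L|\!|\!|_{2,\mathbb{P}}:=\sup\{\sum_i\|L(\mathbf{1}_{A_i}x_i)\|_U:A_i\in\mathcal{F}$ pairwise disjoint, $x_i\in H$, $\mathbb{E}\|\sum_i\mathbf{1}_{A_i}x_i\|_H^2\le1\}$, and $\Lambda_2^{\mathbb{P}}(H,U)$ is the set of such $L$ with finite norm; for such $L$, $A\mapsto L(\cdot\,\mathbf{1}_A)$ is a vector measure $\mathcal{F}\to L(H,U)$. *)

theory Defs
  imports "HOL-Analysis.Analysis" "HOL-Probability.Probability"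
begin

definition standing_prob_space :: "('a::polish_space) measure \<Rightarrow> bool" where
  "standing_prob_space M \<longleftrightarrow> prob_space M \<and> space M = UNIV \<and>
     (\<exists>M'. sets M' = sets borel \<and> M = completion M') \<and>
     (\<forall>A\<in>sets M. 0 < measure M A \<longrightarrow>
        (\<exists>B\<in>sets M. B \<subseteq> A \<and> 0 < measure M B \<and> measure M B < measure M A))"

definition L2 :: "'a measure \<Rightarrow> ('a \<Rightarrow> 'h::real_normed_vector) set" where
  "L2 M = {X. X \<in> borel_measurable M \<and> integrable M (\<lambda>\<omega>. (norm (X \<omega>))\<^sup>2)}"

definition L2norm :: "'a measure \<Rightarrow> ('a \<Rightarrow> 'h::real_normed_vector) \<Rightarrow> real" where
  "L2norm M X = sqrt (\<integral>\<omega>. (norm (X \<omega>))\<^sup>2 \<partial>M)"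

definition lift :: "'a measure \<Rightarrow> ('h::topological_space measure \<Rightarrow> 'u) \<Rightarrow> ('a \<Rightarrow> 'h) \<Rightarrow> 'u" where
  "lift M f X = f (distr M borel X)"

definition frechet_L2 ::
  "'a measure \<Rightarrow> (('a \<Rightarrow> 'h::real_normed_vector) \<Rightarrow> 'u::real_normed_vector) \<Rightarrow> ('a \<Rightarrow> 'h)
     \<Rightarrow> (('a \<Rightarrow> 'h) \<Rightarrow> 'u) \<Rightarrow> bool" where
  "frechet_L2 M F X0 DF \<longleftrightarrow>
     (\<forall>Y\<in>L2 M. \<forall>Z\<in>L2 M. DF (\<lambda>\<omega>. Y \<omega> + Z \<omega>) = DF Y + DF Z) \<and>
     (\<forall>Y\<in>L2 M. \<forall>c::real. DF (\<lambda>\<omega>. c *\<^sub>R Y \<omega>) = c *\<^sub>R DF Y) \<and>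
     (\<exists>C. \<forall>Y\<in>L2 M. norm (DF Y) \<le> C * L2norm M Y) \<and>
     (\<forall>e>0. \<exists>d>0. \<forall>Y\<in>L2 M. L2norm M Y < d \<longrightarrow>
        norm (F (\<lambda>\<omega>. X0 \<omega> + Y \<omega>) - F X0 - DF Y) \<le> e * L2norm M Y)"

definition lambda2_norm ::
  "'a measure \<Rightarrow> (('a \<Rightarrow> 'h::real_normed_vector) \<Rightarrow> 'u::real_normed_vector) \<Rightarrow> ennreal" where
  "lambda2_norm M L = Sup {ennreal (\<Sum>i<n. norm (L (\<lambda>\<omega>. indicator (A i) \<omega> *\<^sub>R x i))) | n A x.
      disjoint_family_on A {..<n::nat} \<and> (\<forall>i<n. A i \<in> sets M) \<and>
      (\<integral>\<omega>. (norm (\<Sum>i<n. indicator (A i) \<omega> *\<^sub>R x i))\<^sup>2 \<partial>M) \<le> 1}"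

definition in_Lambda2 ::
  "'a measure \<Rightarrow> (('a \<Rightarrow> 'h::real_normed_vector) \<Rightarrow> 'u::real_normed_vector) \<Rightarrow> bool" where
  "in_Lambda2 M L \<longleftrightarrow> lambda2_norm M L < \<top>"

definition vmeas ::
  "(('a \<Rightarrow> 'h::real_normed_vector) \<Rightarrow> 'u::real_normed_vector) \<Rightarrow> 'a set \<Rightarrow> 'h \<Rightarrow>\<^sub>L 'u" where
  "vmeas DF A = Blinfun (\<lambda>u. DF (\<lambda>\<omega>. indicator A \<omega> *\<^sub>R u))"

definition vmeas_push ::
  "'a measure \<Rightarrow> (('a \<Rightarrow> 'h::real_normed_vector) \<Rightarrow> 'u::real_normed_vector) \<Rightarrow> ('a \<Rightarrow> 'h) \<Rightarrow> 'h set \<Rightarrow> 'h \<Rightarrow>\<^sub>L 'u" where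
  "vmeas_push M DF X0 B = vmeas DF (X0 -` B \<inter> space M)"

end

(* The vector measure m(A) u = DF (u 1_A) is finitely additive, and |m(A)| <= C sqrt (P A)
   because DF is bounded on L^2.  On an atom E = {X0 = x_k} of the law, m(A) for A <= E depends
   only on P A: if P A = P B then X0 + t u 1_A and X0 + t u 1_B have the same law, so the lift
   takes the same value at both, and Frechet differentiability forces DF (u 1_A) = DF (u 1_B).
   As P is atomless, every value in [0, P E] is the measure of a subset of E, so on E the map
   P A |-> m(A) is an additive function on an interval bounded by C sqrt, hence linear:
   m(A) = P A / P E * m(E).  Summing over the atoms, which carry full measure, gives
   m(A) = sum_k P (A /\ E_k) / P E_k * m(E_k), the integral over A of the stated density. *)

theory Submission
  imports Defs
begin

definition atomless :: "'a measure \<Rightarrow> bool" where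
  "atomless M \<longleftrightarrow> (\<forall>A\<in>sets M. 0 < measure M A \<longrightarrow>
     (\<exists>B\<in>sets M. B \<subseteq> A \<and> 0 < measure M B \<and> measure M B < measure M A))"

context finite_measure
begin

lemma atomless_subset_measure_le_half:
  assumes "atomless M" and F: "F \<in> sets M" "0 < measure M F"
  shows "\<exists>G\<in>sets M. G \<subseteq> F \<and> 0 < measure M G \<and> measure M G \<le> measure M F / 2"
proof -
  obtain B where B: "B \<in> sets M" "B \<subseteq> F" "0 < measure M B" "measure M B < measure M F"
    using assms unfolding atomless_def by blast
  have "measure M (F - B) = measure M F - measure M B"
    using B F by (intro finite_measure_Diff) auto
  then show ?thesis
  proof (cases "measure M B \<le> measure M F / 2")
    case True
    then show ?thesis using B by blast
  next
    case False
    then show ?thesis using B F \<open>measure M (F - B) = _\<close> by (intro bexI[of _ "F - B"]) auto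
  qed
qed

lemma atomless_small_subset:
  assumes "atomless M" and F: "F \<in> sets M" "0 < measure M F" and "0 < e"
  shows "\<exists>G\<in>sets M. G \<subseteq> F \<and> 0 < measure M G \<and> measure M G < e"
proof -
  have halving: "\<exists>G\<in>sets M. G \<subseteq> F \<and> 0 < measure M G \<and> measure M G \<le> measure M F / 2 ^ n" for n
  proof (induction n)
    case 0
    show ?case using F by auto
  next
    case (Suc n)
    then obtain G where G: "G \<in> sets M" "G \<subseteq> F" "0 < measure M G" "measure M G \<le> measure M F / 2 ^ n"
      by blast
    then obtain G' where "G' \<in> sets M" "G' \<subseteq> G" "0 < measure M G'" "measure M G' \<le> measure M G / 2"
      using atomless_subset_measure_le_half[OF \<open>atomless M\<close>] by blast
    moreover have "measure M G / 2 \<le> measure M F / 2 ^ Suc n"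
      using G(4) by simp
    ultimately show ?case
      using G(2) by (intro bexI[of _ G']) auto
  qed
  obtain n where "measure M F / e < 2 ^ n"
    using real_arch_pow[of 2 "measure M F / e"] by auto
  then have "measure M F / 2 ^ n < e"
    using \<open>0 < e\<close> by (simp add: field_simps)
  moreover obtain G where "G \<in> sets M" "G \<subseteq> F" "0 < measure M G" "measure M G \<le> measure M F / 2 ^ n"
    using halving by blast
  ultimately show ?thesis by (intro bexI[of _ G]) auto
qed

lemma exists_set_measure_ge_half_Sup:
  assumes "\<G> \<subseteq> sets M" "G\<^sub>0 \<in> \<G>"
  shows "\<exists>G\<in>\<G>. \<forall>G'\<in>\<G>. measure M G' \<le> 2 * measure M G"
proof -
  define s where "s = Sup (measure M ` \<G>)"
  have bdd: "bdd_above (measure M ` \<G>)"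
    using assms(1) by (intro bdd_aboveI[of _ "measure M (space M)"]) (auto intro!: bounded_measure)
  have le_s: "measure M G' \<le> s" if "G' \<in> \<G>" for G'
    unfolding s_def using that bdd by (intro cSup_upper) auto
  show ?thesis
  proof (cases "s \<le> 0")
    case True
    have "measure M G' \<le> 2 * measure M G\<^sub>0" if "G' \<in> \<G>" for G'
      using le_s[OF that] True measure_nonneg[of M G\<^sub>0] by linarith
    then show ?thesis using assms(2) by blast
  next
    case False
    then have "s / 2 < Sup (measure M ` \<G>)" by (simp add: s_def)
    moreover have "measure M ` \<G> \<noteq> {}" using assms(2) by blast
    ultimately obtain G where G: "G \<in> \<G>" "s / 2 < measure M G"
      using less_cSup_iff[OF _ bdd] by blast
    have "measure M G' \<le> 2 * measure M G" if "G' \<in> \<G>" for G'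
      using le_s[OF that] G(2) by linarith
    with G(1) show ?thesis by blast
  qed
qed

lemma measure_Suc_diff_tendsto_0:
  assumes "range U \<subseteq> sets M" "incseq U"
  shows "(\<lambda>n. measure M (U (Suc n)) - measure M (U n)) \<longlonglongrightarrow> 0"
  using tendsto_diff[OF LIMSEQ_Suc[OF finite_Lim_measure_incseq[OF assms]] finite_Lim_measure_incseq[OF assms]]
  by simp

text \<open>Greedy exhaustion: each step adds at least half of the largest admissible increment, so
  the increments tend to \<open>0\<close> and no admissible set of positive measure is left over.\<close>
lemma exists_subset_measure_le_exhausting:
  assumes F: "F \<in> sets M" and "0 \<le> t"
  shows "\<exists>W\<in>sets M. W \<subseteq> F \<and> measure M W \<le> t \<and>
    (\<forall>G\<in>sets M. G \<subseteq> F - W \<longrightarrow> measure M G \<le> t - measure M W \<longrightarrow> measure M G = 0)"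
proof -
  define cand where "cand U = {G \<in> sets M. G \<subseteq> F - U \<and> measure M G \<le> t - measure M U}" for U
  have "\<exists>G\<in>cand U. \<forall>G'\<in>cand U. measure M G' \<le> 2 * measure M G"
    if "measure M U \<le> t" for U
    using exists_set_measure_ge_half_Sup[of "cand U" "{}"] that by (auto simp: cand_def)
  then obtain step where step: "\<And>U. measure M U \<le> t \<Longrightarrow>
      step U \<in> cand U \<and> (\<forall>G'\<in>cand U. measure M G' \<le> 2 * measure M (step U))"
    by metis
  define U where "U = rec_nat {} (\<lambda>_ V. V \<union> step V)"
  have U_Suc: "U (Suc n) = U n \<union> step (U n)" for n
    by (simp add: U_def)
  have measure_U_Suc: "measure M (U (Suc n)) = measure M (U n) + measure M (step (U n))"
    if "U n \<in> sets M" "measure M (U n) \<le> t" for n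
    using step[OF that(2)] that unfolding U_Suc cand_def by (intro finite_measure_Union) auto
  have U: "U n \<in> sets M \<and> U n \<subseteq> F \<and> measure M (U n) \<le> t" for n
  proof (induction n)
    case 0
    show ?case using \<open>0 \<le> t\<close> by (simp add: U_def)
  next
    case (Suc n)
    then show ?case
      using measure_U_Suc[of n] step[of "U n"] by (auto simp: U_Suc cand_def)
  qed
  define W where "W = (\<Union>n. U n)"
  have W: "W \<in> sets M" "W \<subseteq> F" and U_W: "U n \<subseteq> W" for n
    using U by (auto simp: W_def)
  have "range U \<subseteq> sets M" "incseq U"
    using U by (auto intro!: incseq_SucI simp: U_Suc)
  from finite_Lim_measure_incseq[OF this] have W_le: "measure M W \<le> t"
    unfolding W_def using U by (intro LIMSEQ_le_const2) auto
  from measure_Suc_diff_tendsto_0[OF \<open>range U \<subseteq> sets M\<close> \<open>incseq U\<close>]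
  have step_to_0: "(\<lambda>n. measure M (step (U n))) \<longlonglongrightarrow> 0"
    using measure_U_Suc U by simp
  have "measure M G = 0" if G: "G \<in> sets M" "G \<subseteq> F - W" "measure M G \<le> t - measure M W" for G
  proof -
    have "G \<in> cand (U n)" for n
      using G U_W[of n] finite_measure_mono[OF U_W[of n] W(1)] by (auto simp: cand_def)
    then have "measure M G / 2 \<le> measure M (step (U n))" for n
      using step[of "U n"] U[of n] by fastforce
    then have "measure M G / 2 \<le> 0"
      by (intro LIMSEQ_le_const[OF step_to_0]) auto
    then show ?thesis using measure_nonneg[of M G] by linarith
  qed
  with W W_le show ?thesis by blast
qed

lemma atomless_exists_subset_measure_eq:
  assumes "atomless M" and F: "F \<in> sets M" and t: "0 \<le> t" "t \<le> measure M F"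
  shows "\<exists>G\<in>sets M. G \<subseteq> F \<and> measure M G = t"
proof -
  obtain W where W: "W \<in> sets M" "W \<subseteq> F" "measure M W \<le> t"
    and null: "\<And>G. G \<in> sets M \<Longrightarrow> G \<subseteq> F - W \<Longrightarrow> measure M G \<le> t - measure M W \<Longrightarrow> measure M G = 0"
    using exists_subset_measure_le_exhausting[OF F t(1)] by blast
  show ?thesis
  proof (rule ccontr)
    assume "\<not> ?thesis"
    then have "measure M W < t" using W by fastforce
    moreover have "0 < measure M (F - W)"
      using \<open>measure M W < t\<close> t W F by (simp add: finite_measure_Diff)
    ultimately obtain G where "G \<in> sets M" "G \<subseteq> F - W" "0 < measure M G" "measure M G < t - measure M W"
      using atomless_small_subset[OF \<open>atomless M\<close>, of "F - W" "t - measure M W"] F W by auto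
    with null show False by fastforce
  qed
qed

text \<open>Moving mass \<open>v\<close> off the atom \<open>a\<close> of \<open>X\<close> on a set \<open>S \<subseteq> {X = a}\<close> transports exactly
  \<open>measure M S\<close> from \<open>a\<close> to \<open>a + v\<close>, whichever set \<open>S\<close> is used.\<close>
lemma distr_add_indicator_scaleR_eq:
  fixes X :: "'a \<Rightarrow> 'h::{real_normed_vector, second_countable_topology}"
  assumes X[measurable]: "X \<in> borel_measurable M"
    and A[measurable]: "A \<in> sets M" "A \<subseteq> X -` {a}"
    and B[measurable]: "B \<in> sets M" "B \<subseteq> X -` {a}"
    and "measure M A = measure M B"
  shows "distr M borel (\<lambda>\<omega>. X \<omega> + indicator A \<omega> *\<^sub>R v) = distr M borel (\<lambda>\<omega>. X \<omega> + indicator B \<omega> *\<^sub>R v)"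
proof -
  have preimage: "measure M ((\<lambda>\<omega>. X \<omega> + indicator S \<omega> *\<^sub>R v) -` Q \<inter> space M) =
      (if a + v \<in> Q then measure M S else 0) + measure M (X -` Q \<inter> space M) - (if a \<in> Q then measure M S else 0)"
    if S: "S \<in> sets M" "S \<subseteq> X -` {a}" and Q: "Q \<in> sets borel" for S Q
  proof -
    have XQ: "X -` Q \<inter> space M \<in> sets M" using Q by measurable
    have "S \<subseteq> space M" using S sets.sets_into_space by auto
    then have "(\<lambda>\<omega>. X \<omega> + indicator S \<omega> *\<^sub>R v) -` Q \<inter> space M =
        (if a + v \<in> Q then S else {}) \<union> ((X -` Q \<inter> space M) - S)"
      and "(X -` Q \<inter> space M) \<inter> S = (if a \<in> Q then S else {})"
      using S by (auto split: split_indicator split_indicator_asm)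
    moreover have "measure M ((if a + v \<in> Q then S else {}) \<union> ((X -` Q \<inter> space M) - S)) =
        measure M (if a + v \<in> Q then S else {}) + measure M ((X -` Q \<inter> space M) - S)"
      using S XQ by (intro finite_measure_Union) auto
    moreover have "measure M ((X -` Q \<inter> space M) - S) = measure M (X -` Q \<inter> space M) - measure M ((X -` Q \<inter> space M) \<inter> S)"
      using S XQ by (intro finite_measure_Diff') auto
    ultimately show ?thesis by auto
  qed
  show ?thesis
  proof (rule measure_eqI)
    fix Q assume "Q \<in> sets (distr M borel (\<lambda>\<omega>. X \<omega> + indicator A \<omega> *\<^sub>R v))"
    then have [measurable]: "Q \<in> sets borel" by simp
    show "emeasure (distr M borel (\<lambda>\<omega>. X \<omega> + indicator A \<omega> *\<^sub>R v)) Q =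
        emeasure (distr M borel (\<lambda>\<omega>. X \<omega> + indicator B \<omega> *\<^sub>R v)) Q"
      using preimage[OF A, of Q] preimage[OF B, of Q] \<open>measure M A = measure M B\<close>
      by (simp add: emeasure_distr emeasure_eq_measure)
  qed simp
qed

end

lemma additive_on_interval_scaleR_of_nat:
  fixes \<phi> :: "real \<Rightarrow> 'b::real_vector"
  assumes add: "\<And>s t. 0 \<le> s \<Longrightarrow> 0 \<le> t \<Longrightarrow> s + t \<le> p \<Longrightarrow> \<phi> (s + t) = \<phi> s + \<phi> t"
    and "0 \<le> a" "real n * a \<le> p"
  shows "\<phi> (real n * a) = real n *\<^sub>R \<phi> a"
  using assms(3)
proof (induction n)
  case 0
  then show ?case using add[of 0 0] by simp
next
  case (Suc n)
  have "real n * a \<le> p" using Suc.prems \<open>0 \<le> a\<close> by (simp add: distrib_right)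
  then have "\<phi> (real n * a + a) = real n *\<^sub>R \<phi> a + \<phi> a"
    using Suc add[of "real n * a" a] \<open>0 \<le> a\<close> by (simp add: distrib_right)
  then show ?case by (simp add: distrib_right scaleR_left_distrib add.commute)
qed

text \<open>On the grid \<open>m p / n\<close> the map is exactly linear, so its deviation from linearity at \<open>s\<close>
  equals the deviation at the distance \<open>r\<close> of \<open>s\<close> to the grid.\<close>
lemma additive_on_interval_linear_defect_near_0:
  fixes \<phi> :: "real \<Rightarrow> 'b::real_vector"
  assumes add: "\<And>s t. 0 \<le> s \<Longrightarrow> 0 \<le> t \<Longrightarrow> s + t \<le> p \<Longrightarrow> \<phi> (s + t) = \<phi> s + \<phi> t"
    and "0 < p" "0 \<le> s" "s \<le> p" "0 < n"
  shows "\<exists>r. 0 \<le> r \<and> r \<le> p / real n \<and> \<phi> s - (s / p) *\<^sub>R \<phi> p = \<phi> r - (r / p) *\<^sub>R \<phi> p"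
proof -
  define m where "m = nat \<lfloor>s * real n / p\<rfloor>"
  define r where "r = s - real m * (p / real n)"
  have n: "0 < real n" using \<open>0 < n\<close> by simp
  have m: "real m \<le> s * real n / p" "s * real n / p < real m + 1"
    using \<open>0 \<le> s\<close> \<open>0 < p\<close> by (auto simp: m_def)
  moreover have "s * real n / p \<le> real n"
    using \<open>s \<le> p\<close> \<open>0 < p\<close> by (simp add: field_simps mult_right_mono)
  ultimately have "real m \<le> real n" by linarith
  then have "real m * (p / real n) \<le> p"
    using mult_right_mono[of "real m" "real n" "p / real n"] \<open>0 < p\<close> n by simp
  have "real m * (p / real n) \<le> s" "s < (real m + 1) * (p / real n)"
    using m n \<open>0 < p\<close> by (simp_all add: field_simps)
  then have r: "0 \<le> r" "r \<le> p / real n"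
    by (simp_all add: r_def algebra_simps add_divide_distrib)
  have "\<phi> p = real n *\<^sub>R \<phi> (p / real n)"
    using additive_on_interval_scaleR_of_nat[of p \<phi> "p / real n" n, OF add] n \<open>0 < p\<close> by simp
  moreover have "\<phi> (real m * (p / real n)) = real m *\<^sub>R \<phi> (p / real n)"
    using additive_on_interval_scaleR_of_nat[of p \<phi> "p / real n" m, OF add]
      \<open>real m * (p / real n) \<le> p\<close> \<open>0 < p\<close> by simp
  ultimately have grid: "\<phi> (real m * (p / real n)) = (real m / real n) *\<^sub>R \<phi> p"
    using n by simp
  have "\<phi> s = (real m / real n) *\<^sub>R \<phi> p + \<phi> r"
    unfolding grid[symmetric] using add[of "real m * (p / real n)" r] r \<open>0 < p\<close> \<open>s \<le> p\<close>
    by (simp add: r_def)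
  moreover have "s / p = real m / real n + r / p"
    using \<open>0 < p\<close> n by (simp add: r_def field_simps)
  ultimately have "\<phi> s - (s / p) *\<^sub>R \<phi> p = \<phi> r - (r / p) *\<^sub>R \<phi> p"
    by (simp add: scaleR_left_distrib)
  with r show ?thesis by blast
qed

lemma additive_on_interval_sqrt_bounded_imp_linear:
  fixes \<phi> :: "real \<Rightarrow> 'b::real_normed_vector"
  assumes add: "\<And>s t. 0 \<le> s \<Longrightarrow> 0 \<le> t \<Longrightarrow> s + t \<le> p \<Longrightarrow> \<phi> (s + t) = \<phi> s + \<phi> t"
    and bound: "\<And>r. 0 \<le> r \<Longrightarrow> r \<le> p \<Longrightarrow> norm (\<phi> r) \<le> C * sqrt r"
    and "0 < p" "0 \<le> C" "0 \<le> s" "s \<le> p"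
  shows "\<phi> s = (s / p) *\<^sub>R \<phi> p"
proof -
  have "norm (\<phi> s - (s / p) *\<^sub>R \<phi> p) \<le> C * sqrt (p / real n) + norm (\<phi> p) / real n"
    if n: "0 < n" for n
  proof -
    obtain r where r: "0 \<le> r" "r \<le> p / real n" and defect: "\<phi> s - (s / p) *\<^sub>R \<phi> p = \<phi> r - (r / p) *\<^sub>R \<phi> p"
      using additive_on_interval_linear_defect_near_0[OF add \<open>0 < p\<close> \<open>0 \<le> s\<close> \<open>s \<le> p\<close> n] by blast
    have "r \<le> p"
      using r(2) \<open>0 < p\<close> n by (simp add: field_simps order.trans[OF r(2)])
    have "norm (\<phi> r - (r / p) *\<^sub>R \<phi> p) \<le> norm (\<phi> r) + (r / p) * norm (\<phi> p)"
      using norm_triangle_ineq4[of "\<phi> r" "(r / p) *\<^sub>R \<phi> p"] r \<open>0 < p\<close> by simp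
    also have "\<dots> \<le> C * sqrt (p / real n) + norm (\<phi> p) / real n"
    proof (rule add_mono)
      show "norm (\<phi> r) \<le> C * sqrt (p / real n)"
        using bound[OF r(1) \<open>r \<le> p\<close>] mult_left_mono[OF real_sqrt_le_mono[OF r(2)] \<open>0 \<le> C\<close>] by linarith
      have "r / p \<le> 1 / real n"
        using r \<open>0 < p\<close> n by (simp add: field_simps)
      then show "r / p * norm (\<phi> p) \<le> norm (\<phi> p) / real n"
        using mult_right_mono[of "r / p" "1 / real n" "norm (\<phi> p)"] by simp
    qed
    finally show ?thesis by (simp only: defect)
  qed
  moreover have "(\<lambda>n. C * sqrt (p / real n) + norm (\<phi> p) / real n) \<longlonglongrightarrow> C * sqrt 0 + 0"
    by (intro tendsto_intros lim_const_over_n)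
  ultimately have "norm (\<phi> s - (s / p) *\<^sub>R \<phi> p) \<le> 0"
    by (intro LIMSEQ_le_const) (auto intro!: exI[of _ 1])
  then show ?thesis by simp
qed

lemma L2norm_nonneg: "0 \<le> L2norm M Y"
  by (auto simp: L2norm_def intro!: integral_nonneg)

lemma L2norm_scaleR: "L2norm M (\<lambda>\<omega>. c *\<^sub>R Y \<omega>) = \<bar>c\<bar> * L2norm M Y"
  by (simp add: L2norm_def power_mult_distrib real_sqrt_mult)

lemma scaleR_in_L2:
  assumes "Y \<in> L2 M"
  shows "(\<lambda>\<omega>. c *\<^sub>R Y \<omega>) \<in> L2 M"
  using assms by (auto simp: L2_def power_mult_distrib)

lemma L2norm_indicator_scaleR:
  assumes "A \<in> sets M"
  shows "L2norm M (\<lambda>\<omega>. indicator A \<omega> *\<^sub>R u) = norm u * sqrt (measure M A)"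
proof -
  have "(\<lambda>\<omega>. (norm (indicator A \<omega> *\<^sub>R u))\<^sup>2) = (\<lambda>\<omega>. indicator A \<omega> * (norm u)\<^sup>2)"
    by (auto simp: indicator_def)
  with assms show ?thesis
    by (simp add: L2norm_def real_sqrt_mult mult.commute)
qed

lemma (in finite_measure) indicator_scaleR_in_L2:
  fixes u :: "'h::{real_normed_vector, second_countable_topology}"
  assumes [measurable]: "A \<in> sets M"
  shows "(\<lambda>\<omega>. indicator A \<omega> *\<^sub>R u) \<in> L2 M"
  unfolding L2_def
proof safe
  show "(\<lambda>\<omega>. indicator A \<omega> *\<^sub>R u) \<in> borel_measurable M" by measurable
  show "integrable M (\<lambda>\<omega>. (norm (indicator A \<omega> *\<^sub>R u))\<^sup>2)"
    by (rule integrable_const_bound[where B="(norm u)\<^sup>2"]) (auto simp: indicator_def)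
qed

lemma frechet_L2_directional_derivative:
  assumes fr: "frechet_L2 M F X0 DF" and Y: "Y \<in> L2 M"
  shows "((\<lambda>t. (1 / t) *\<^sub>R (F (\<lambda>\<omega>. X0 \<omega> + t *\<^sub>R Y \<omega>) - F X0)) \<longlongrightarrow> DF Y) (at_right 0)"
proof (rule tendstoI)
  fix e :: real assume "0 < e"
  define K where "K = L2norm M Y + 1"
  have "0 < K" using L2norm_nonneg[of M Y] by (simp add: K_def)
  have DF_scaleR: "DF (\<lambda>\<omega>. t *\<^sub>R Y \<omega>) = t *\<^sub>R DF Y" for t
    using fr Y unfolding frechet_L2_def by blast
  have rem: "\<forall>e>0. \<exists>d>0. \<forall>W\<in>L2 M. L2norm M W < d \<longrightarrow>
      norm (F (\<lambda>\<omega>. X0 \<omega> + W \<omega>) - F X0 - DF W) \<le> e * L2norm M W"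
    using fr unfolding frechet_L2_def by blast
  obtain d where "0 < d" and d: "\<And>W. W \<in> L2 M \<Longrightarrow> L2norm M W < d \<Longrightarrow>
      norm (F (\<lambda>\<omega>. X0 \<omega> + W \<omega>) - F X0 - DF W) \<le> e / K * L2norm M W"
    using rem[rule_format, of "e / K"] \<open>0 < e\<close> \<open>0 < K\<close> by auto
  have "dist ((1 / t) *\<^sub>R (F (\<lambda>\<omega>. X0 \<omega> + t *\<^sub>R Y \<omega>) - F X0)) (DF Y) < e"
    if t: "0 < t" "t < d / K" for t
  proof -
    have "t * L2norm M Y < d"
      using t \<open>0 < K\<close> L2norm_nonneg[of M Y] by (simp add: K_def field_simps)
    then have bound: "norm (F (\<lambda>\<omega>. X0 \<omega> + t *\<^sub>R Y \<omega>) - F X0 - t *\<^sub>R DF Y) \<le> e / K * (t * L2norm M Y)"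
      using d[OF scaleR_in_L2[OF Y, of t]] t by (simp add: L2norm_scaleR DF_scaleR)
    have "(1 / t) *\<^sub>R (F (\<lambda>\<omega>. X0 \<omega> + t *\<^sub>R Y \<omega>) - F X0) - DF Y =
        (1 / t) *\<^sub>R (F (\<lambda>\<omega>. X0 \<omega> + t *\<^sub>R Y \<omega>) - F X0 - t *\<^sub>R DF Y)"
      using t by (simp add: algebra_simps)
    then have "dist ((1 / t) *\<^sub>R (F (\<lambda>\<omega>. X0 \<omega> + t *\<^sub>R Y \<omega>) - F X0)) (DF Y) =
        norm (F (\<lambda>\<omega>. X0 \<omega> + t *\<^sub>R Y \<omega>) - F X0 - t *\<^sub>R DF Y) / t"
      using t by (simp add: dist_norm)
    also have "\<dots> \<le> e / K * L2norm M Y"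
      using bound t \<open>0 < K\<close> by (simp add: field_simps)
    also have "\<dots> < e"
      using \<open>0 < e\<close> \<open>0 < K\<close> by (simp add: K_def field_simps)
    finally show ?thesis .
  qed
  then show "\<forall>\<^sub>F t in at_right 0. dist ((1 / t) *\<^sub>R (F (\<lambda>\<omega>. X0 \<omega> + t *\<^sub>R Y \<omega>) - F X0)) (DF Y) < e"
    using eventually_at_right_real[of 0 "d / K"] \<open>0 < d\<close> \<open>0 < K\<close> by (auto elim!: eventually_mono)
qed

lemma frechet_L2_derivative_eq:
  assumes fr: "frechet_L2 M F X0 DF" and Y: "Y \<in> L2 M" and Z: "Z \<in> L2 M"
    and F_eq: "\<And>t. 0 < t \<Longrightarrow> F (\<lambda>\<omega>. X0 \<omega> + t *\<^sub>R Y \<omega>) = F (\<lambda>\<omega>. X0 \<omega> + t *\<^sub>R Z \<omega>)"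
  shows "DF Y = DF Z"
proof (rule tendsto_unique[OF trivial_limit_at_right_real])
  show "((\<lambda>t. (1 / t) *\<^sub>R (F (\<lambda>\<omega>. X0 \<omega> + t *\<^sub>R Y \<omega>) - F X0)) \<longlongrightarrow> DF Y) (at_right 0)"
    using fr Y by (rule frechet_L2_directional_derivative)
  have ev: "\<forall>\<^sub>F t in at_right 0. (1 / t) *\<^sub>R (F (\<lambda>\<omega>. X0 \<omega> + t *\<^sub>R Y \<omega>) - F X0) =
      (1 / t) *\<^sub>R (F (\<lambda>\<omega>. X0 \<omega> + t *\<^sub>R Z \<omega>) - F X0)"
    using eventually_at_right_real[of 0 1] F_eq by (auto elim!: eventually_mono)
  show "((\<lambda>t. (1 / t) *\<^sub>R (F (\<lambda>\<omega>. X0 \<omega> + t *\<^sub>R Y \<omega>) - F X0)) \<longlongrightarrow> DF Z) (at_right 0)"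
    by (rule tendsto_cong[OF ev, THEN iffD2, OF frechet_L2_directional_derivative[OF fr Z]])
qed

locale L2_bounded_linear = finite_measure M for M :: "'a measure" +
  fixes DF :: "('a \<Rightarrow> 'h::{real_normed_vector, second_countable_topology}) \<Rightarrow> 'u::real_normed_vector"
    and C :: real
  assumes DF_add: "Y \<in> L2 M \<Longrightarrow> Z \<in> L2 M \<Longrightarrow> DF (\<lambda>\<omega>. Y \<omega> + Z \<omega>) = DF Y + DF Z"
    and DF_scaleR: "Y \<in> L2 M \<Longrightarrow> DF (\<lambda>\<omega>. c *\<^sub>R Y \<omega>) = c *\<^sub>R DF Y"
    and norm_DF_le: "Y \<in> L2 M \<Longrightarrow> norm (DF Y) \<le> C * L2norm M Y"
    and C_nonneg: "0 \<le> C"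

lemma frechet_L2_imp_L2_bounded_linear:
  assumes "finite_measure M" "frechet_L2 M F X0 DF"
  shows "\<exists>C. L2_bounded_linear M DF C"
proof -
  obtain C where C: "\<And>Y. Y \<in> L2 M \<Longrightarrow> norm (DF Y) \<le> C * L2norm M Y"
    using assms(2) unfolding frechet_L2_def by blast
  have "norm (DF Y) \<le> max C 0 * L2norm M Y" if "Y \<in> L2 M" for Y
  proof -
    have "C * L2norm M Y \<le> max C 0 * L2norm M Y"
      by (intro mult_right_mono L2norm_nonneg) simp
    with C[OF that] show ?thesis by linarith
  qed
  then have "L2_bounded_linear M DF (max C 0)"
    using assms unfolding frechet_L2_def
    by (intro L2_bounded_linear.intro L2_bounded_linear_axioms.intro) auto
  then show ?thesis ..
qed

context L2_bounded_linear
begin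

lemma bounded_linear_DF_indicator:
  assumes A: "A \<in> sets M"
  shows "bounded_linear (\<lambda>u. DF (\<lambda>\<omega>. indicator A \<omega> *\<^sub>R u))"
proof (rule bounded_linear_intro[where K="C * sqrt (measure M A)"])
  fix u v :: 'h and r :: real
  show "DF (\<lambda>\<omega>. indicator A \<omega> *\<^sub>R (u + v)) = DF (\<lambda>\<omega>. indicator A \<omega> *\<^sub>R u) + DF (\<lambda>\<omega>. indicator A \<omega> *\<^sub>R v)"
    using DF_add[OF indicator_scaleR_in_L2[OF A, of u] indicator_scaleR_in_L2[OF A, of v]]
    by (simp add: scaleR_right_distrib)
  show "DF (\<lambda>\<omega>. indicator A \<omega> *\<^sub>R (r *\<^sub>R u)) = r *\<^sub>R DF (\<lambda>\<omega>. indicator A \<omega> *\<^sub>R u)"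
    using DF_scaleR[OF indicator_scaleR_in_L2[OF A, of u], of r] by (simp add: ac_simps)
  show "norm (DF (\<lambda>\<omega>. indicator A \<omega> *\<^sub>R u)) \<le> norm u * (C * sqrt (measure M A))"
    using norm_DF_le[OF indicator_scaleR_in_L2[OF A, of u]] by (simp add: L2norm_indicator_scaleR A ac_simps)
qed

lemma vmeas_apply: "A \<in> sets M \<Longrightarrow> vmeas DF A u = DF (\<lambda>\<omega>. indicator A \<omega> *\<^sub>R u)"
  unfolding vmeas_def by (simp add: bounded_linear_Blinfun_apply bounded_linear_DF_indicator)

lemma norm_vmeas_le:
  assumes A: "A \<in> sets M"
  shows "norm (vmeas DF A) \<le> C * sqrt (measure M A)"
proof (rule norm_blinfun_bound)
  show "0 \<le> C * sqrt (measure M A)" using C_nonneg by simp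
  fix u
  show "norm (vmeas DF A u) \<le> C * sqrt (measure M A) * norm u"
    using norm_DF_le[OF indicator_scaleR_in_L2[OF A, of u]]
    by (simp add: vmeas_apply A L2norm_indicator_scaleR ac_simps)
qed

lemma vmeas_null: "A \<in> sets M \<Longrightarrow> measure M A = 0 \<Longrightarrow> vmeas DF A = 0"
  using norm_vmeas_le[of A] by simp

lemma vmeas_Un:
  assumes A: "A \<in> sets M" and B: "B \<in> sets M" and "A \<inter> B = {}"
  shows "vmeas DF (A \<union> B) = vmeas DF A + vmeas DF B"
proof (rule blinfun_eqI)
  fix u :: 'h
  have "(\<lambda>\<omega>. indicator (A \<union> B) \<omega> *\<^sub>R u) = (\<lambda>\<omega>. indicator A \<omega> *\<^sub>R u + indicator B \<omega> *\<^sub>R u)"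
    using \<open>A \<inter> B = {}\<close> by (auto simp: indicator_def fun_eq_iff)
  moreover have "A \<union> B \<in> sets M" using A B by blast
  ultimately show "vmeas DF (A \<union> B) u = (vmeas DF A + vmeas DF B) u"
    using DF_add[OF indicator_scaleR_in_L2[OF A, of u] indicator_scaleR_in_L2[OF B, of u]]
    by (simp add: vmeas_apply A B blinfun.add_left)
qed

lemma vmeas_UN:
  assumes "finite I" "\<And>i. i \<in> I \<Longrightarrow> S i \<in> sets M" "disjoint_family_on S I"
  shows "vmeas DF (\<Union>i\<in>I. S i) = (\<Sum>i\<in>I. vmeas DF (S i))"
  using assms
proof (induction I rule: finite_induct)
  case empty
  then show ?case using vmeas_null[of "{}"] by simp
next
  case (insert i I)
  then have "S i \<inter> (\<Union>j\<in>I. S j) = {}" "disjoint_family_on S I"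
    by (auto simp: disjoint_family_on_def)
  moreover have "S i \<in> sets M" "(\<Union>j\<in>I. S j) \<in> sets M"
    using insert by auto
  ultimately show ?case
    using insert vmeas_Un[of "S i" "\<Union>j\<in>I. S j"] by simp
qed

lemma vmeas_eq_if_measure_eq:
  assumes fr: "frechet_L2 M (lift M f) X DF" and X: "X \<in> borel_measurable M"
    and A: "A \<in> sets M" "A \<subseteq> X -` {a}"
    and B: "B \<in> sets M" "B \<subseteq> X -` {a}"
    and "measure M A = measure M B"
  shows "vmeas DF A = vmeas DF B"
proof (rule blinfun_eqI)
  fix u :: 'h
  have "lift M f (\<lambda>\<omega>. X \<omega> + t *\<^sub>R (indicator A \<omega> *\<^sub>R u)) = lift M f (\<lambda>\<omega>. X \<omega> + t *\<^sub>R (indicator B \<omega> *\<^sub>R u))"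
    for t :: real
    using distr_add_indicator_scaleR_eq[OF X A B \<open>measure M A = measure M B\<close>, of "t *\<^sub>R u"]
    by (simp add: lift_def ac_simps)
  then have "DF (\<lambda>\<omega>. indicator A \<omega> *\<^sub>R u) = DF (\<lambda>\<omega>. indicator B \<omega> *\<^sub>R u)"
    by (intro frechet_L2_derivative_eq[OF fr] indicator_scaleR_in_L2 A(1) B(1))
  then show "vmeas DF A u = vmeas DF B u"
    by (simp add: vmeas_apply A(1) B(1))
qed

lemma vmeas_factors_through_measure:
  assumes "atomless M" and E: "E \<in> sets M"
    and inv: "\<And>A B. A \<in> sets M \<Longrightarrow> B \<in> sets M \<Longrightarrow> A \<subseteq> E \<Longrightarrow> B \<subseteq> E \<Longrightarrow>
      measure M A = measure M B \<Longrightarrow> vmeas DF A = vmeas DF B"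
  obtains \<phi> where "\<And>G. G \<in> sets M \<Longrightarrow> G \<subseteq> E \<Longrightarrow> \<phi> (measure M G) = vmeas DF G"
    and "\<And>s t. 0 \<le> s \<Longrightarrow> 0 \<le> t \<Longrightarrow> s + t \<le> measure M E \<Longrightarrow> \<phi> (s + t) = \<phi> s + \<phi> t"
    and "\<And>r. 0 \<le> r \<Longrightarrow> r \<le> measure M E \<Longrightarrow> norm (\<phi> r) \<le> C * sqrt r"
proof -
  have "\<exists>G. G \<in> sets M \<and> G \<subseteq> E \<and> measure M G = s" if "0 \<le> s" "s \<le> measure M E" for s
    using atomless_exists_subset_measure_eq[OF \<open>atomless M\<close> E] that by auto
  then obtain S where S: "\<And>s. 0 \<le> s \<Longrightarrow> s \<le> measure M E \<Longrightarrow>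
      S s \<in> sets M \<and> S s \<subseteq> E \<and> measure M (S s) = s"
    by metis
  define \<phi> where "\<phi> s = vmeas DF (S s)" for s
  have \<phi>_measure: "\<phi> (measure M G) = vmeas DF G" if G: "G \<in> sets M" "G \<subseteq> E" for G
    using S[of "measure M G"] G finite_measure_mono[OF G(2) E] unfolding \<phi>_def by (intro inv) auto
  moreover have "\<phi> (s + t) = \<phi> s + \<phi> t" if st: "0 \<le> s" "0 \<le> t" "s + t \<le> measure M E" for s t
  proof -
    obtain G where G: "G \<in> sets M" "G \<subseteq> E" "measure M G = s + t"
      using S[of "s + t"] st by auto
    obtain G' where G': "G' \<in> sets M" "G' \<subseteq> G" "measure M G' = s"
      using atomless_exists_subset_measure_eq[OF \<open>atomless M\<close> G(1), of s] st G(3) by auto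
    have "measure M (G - G') = t"
      using finite_measure_Diff[OF G(1) G'(1,2)] G(3) G'(3) by simp
    then have "\<phi> t = vmeas DF (G - G')"
      using \<phi>_measure[of "G - G'"] G G' by auto
    moreover have "\<phi> s = vmeas DF G'" "\<phi> (s + t) = vmeas DF G"
      using \<phi>_measure[of G'] \<phi>_measure[OF G(1,2)] G G' by auto
    moreover have "vmeas DF G = vmeas DF G' + vmeas DF (G - G')"
      using vmeas_Un[of G' "G - G'"] G(1) G'(1,2) by (simp add: Un_absorb1 sets.Diff)
    ultimately show ?thesis by simp
  qed
  moreover have "norm (\<phi> r) \<le> C * sqrt r" if "0 \<le> r" "r \<le> measure M E" for r
    using norm_vmeas_le[of "S r"] S[OF that] unfolding \<phi>_def by auto
  ultimately show ?thesis using that by blast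
qed

lemma vmeas_proportional:
  assumes "atomless M" and E: "E \<in> sets M"
    and inv: "\<And>A B. A \<in> sets M \<Longrightarrow> B \<in> sets M \<Longrightarrow> A \<subseteq> E \<Longrightarrow> B \<subseteq> E \<Longrightarrow>
      measure M A = measure M B \<Longrightarrow> vmeas DF A = vmeas DF B"
    and A: "A \<in> sets M" "A \<subseteq> E"
  shows "vmeas DF A = (measure M A / measure M E) *\<^sub>R vmeas DF E"
proof (cases "measure M E = 0")
  case True
  then have "measure M A = 0"
    using finite_measure_mono[OF A(2) E] measure_nonneg[of M A] by linarith
  then show ?thesis using vmeas_null[OF A(1)] by simp
next
  case False
  then have "0 < measure M E" using measure_nonneg[of M E] by linarith
  obtain \<phi> where \<phi>_measure: "\<And>G. G \<in> sets M \<Longrightarrow> G \<subseteq> E \<Longrightarrow> \<phi> (measure M G) = vmeas DF G"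
    and add: "\<And>s t. 0 \<le> s \<Longrightarrow> 0 \<le> t \<Longrightarrow> s + t \<le> measure M E \<Longrightarrow> \<phi> (s + t) = \<phi> s + \<phi> t"
    and bound: "\<And>r. 0 \<le> r \<Longrightarrow> r \<le> measure M E \<Longrightarrow> norm (\<phi> r) \<le> C * sqrt r"
    using vmeas_factors_through_measure[OF \<open>atomless M\<close> E inv] by blast
  have "\<phi> (measure M A) = (measure M A / measure M E) *\<^sub>R \<phi> (measure M E)"
    by (rule additive_on_interval_sqrt_bounded_imp_linear[OF add bound \<open>0 < measure M E\<close> C_nonneg
          measure_nonneg finite_measure_mono[OF A(2) E]])
  then show ?thesis
    using \<phi>_measure[OF A] \<phi>_measure[OF E order_refl] by simp
qed

lemma vmeas_eq_sum_level_sets: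
  assumes "atomless M" and fr: "frechet_L2 M (lift M f) X DF" and X[measurable]: "X \<in> borel_measurable M"
    and "finite S" and AE: "AE \<omega> in M. X \<omega> \<in> S" and A: "A \<in> sets M"
  shows "vmeas DF A = (\<Sum>a\<in>S. (measure M (A \<inter> X -` {a}) / measure M (X -` {a} \<inter> space M)) *\<^sub>R
    vmeas DF (X -` {a} \<inter> space M))"
proof -
  define E where "E a = X -` {a} \<inter> space M" for a
  have E: "E a \<in> sets M" for a
    unfolding E_def by measurable
  have A_E: "A \<inter> X -` {a} = A \<inter> E a" for a
    using sets.sets_into_space[OF A] by (auto simp: E_def)
  have proportional: "vmeas DF (A \<inter> E a) = (measure M (A \<inter> E a) / measure M (E a)) *\<^sub>R vmeas DF (E a)" for a
    using vmeas_eq_if_measure_eq[OF fr X] A E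
    by (intro vmeas_proportional[OF \<open>atomless M\<close> E]) (auto simp: E_def)
  define R where "R = A - (\<Union>a\<in>S. E a)"
  have R: "R \<in> sets M"
    using A E \<open>finite S\<close> by (auto simp: R_def)
  have "AE \<omega> in M. \<omega> \<notin> R"
    using AE sets.sets_into_space[OF A] by (auto simp: R_def E_def elim!: eventually_mono)
  then have "measure M R = 0"
    using AE_iff_null_sets[OF R] measure_eq_0_null_sets by blast
  have decomp: "A = (\<Union>a\<in>S. A \<inter> E a) \<union> R" and "(\<Union>a\<in>S. A \<inter> E a) \<inter> R = {}"
    by (auto simp: R_def)
  have "(\<Union>a\<in>S. A \<inter> E a) \<in> sets M"
    using A E \<open>finite S\<close> by auto
  then have "vmeas DF A = vmeas DF (\<Union>a\<in>S. A \<inter> E a) + vmeas DF R"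
    using vmeas_Un[OF _ R \<open>_ \<inter> R = {}\<close>] arg_cong[OF decomp, of "vmeas DF"] by simp
  also have "vmeas DF (\<Union>a\<in>S. A \<inter> E a) = (\<Sum>a\<in>S. vmeas DF (A \<inter> E a))"
    using A E \<open>finite S\<close> by (intro vmeas_UN) (auto simp: disjoint_family_on_def E_def)
  finally show ?thesis
    using vmeas_null[OF R \<open>measure M R = 0\<close>] by (simp add: A_E[unfolded E_def] proportional[unfolded E_def] E_def)
qed

end

text \<open>Operator spaces \<open>'h \<Rightarrow>\<^sub>L 'u\<close> are not separable in general (there is no
  \<open>second_countable_topology\<close> instance), so the Bochner integral lemmas of the library do not apply
  to them; for finitely valued integrands the simple integral suffices.\<close>
lemma simple_bochner_integral_sum:
  fixes f :: "'i \<Rightarrow> 'a \<Rightarrow> 'b::real_normed_vector"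
  assumes "finite I" and "\<And>i. i \<in> I \<Longrightarrow> Bochner_Integration.simple_bochner_integrable M (f i)"
  shows "Bochner_Integration.simple_bochner_integrable M (\<lambda>\<omega>. \<Sum>i\<in>I. f i \<omega>) \<and>
    Bochner_Integration.simple_bochner_integral M (\<lambda>\<omega>. \<Sum>i\<in>I. f i \<omega>) =
      (\<Sum>i\<in>I. Bochner_Integration.simple_bochner_integral M (f i))"
  using assms
proof (induction I rule: finite_induct)
  case empty
  have "Bochner_Integration.simple_bochner_integrable M (\<lambda>\<omega>. 0 :: 'b)"
    by (intro Bochner_Integration.simple_bochner_integrable.intros) auto
  then show ?case by (auto simp: simple_bochner_integral_def intro!: sum.neutral)
next
  case (insert i I)
  then show ?case
    by (simp add: simple_bochner_integrable_compose2[where p="(+)"] simple_bochner_integral_add)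
qed

context finite_measure
begin

lemma simple_bochner_integral_indicator_scaleR:
  fixes c :: "'b::real_normed_vector"
  assumes A: "A \<in> sets M"
  shows "Bochner_Integration.simple_bochner_integrable M (\<lambda>\<omega>. indicator A \<omega> *\<^sub>R c)"
    and "Bochner_Integration.simple_bochner_integral M (\<lambda>\<omega>. indicator A \<omega> *\<^sub>R c) = measure M A *\<^sub>R c"
proof -
  have ind: "Bochner_Integration.simple_bochner_integrable M (indicator A :: 'a \<Rightarrow> real)"
    using A by (intro Bochner_Integration.simple_bochner_integrable.intros) (auto simp: emeasure_eq_measure)
  show "Bochner_Integration.simple_bochner_integrable M (\<lambda>\<omega>. indicator A \<omega> *\<^sub>R c)"
    using simple_bochner_integrable_compose2[where p="\<lambda>r _. r *\<^sub>R c", OF _ ind ind] by simp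
  have "Bochner_Integration.simple_bochner_integral M (\<lambda>\<omega>. indicator A \<omega> *\<^sub>R c) =
      Bochner_Integration.simple_bochner_integral M (indicator A :: 'a \<Rightarrow> real) *\<^sub>R c"
    by (rule simple_bochner_integral_linear[OF bounded_linear.linear[OF bounded_linear_scaleR_left] ind])
  also have "Bochner_Integration.simple_bochner_integral M (indicator A :: 'a \<Rightarrow> real) = measure M A"
    using simple_bochner_integrable_eq_integral[OF ind] A by (simp add: Int_absorb2 sets.sets_into_space)
  finally show "Bochner_Integration.simple_bochner_integral M (\<lambda>\<omega>. indicator A \<omega> *\<^sub>R c) = measure M A *\<^sub>R c" .
qed

lemma simple_bochner_integral_indicator_scaleR_sum:
  fixes c :: "'i \<Rightarrow> 'b::real_normed_vector"
  assumes "finite I" and "\<And>i. i \<in> I \<Longrightarrow> A i \<in> sets M"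
  shows "Bochner_Integration.simple_bochner_integrable M (\<lambda>\<omega>. \<Sum>i\<in>I. indicator (A i) \<omega> *\<^sub>R c i) \<and>
    Bochner_Integration.simple_bochner_integral M (\<lambda>\<omega>. \<Sum>i\<in>I. indicator (A i) \<omega> *\<^sub>R c i) =
      (\<Sum>i\<in>I. measure M (A i) *\<^sub>R c i)"
proof -
  have sbi: "Bochner_Integration.simple_bochner_integrable M (\<lambda>\<omega>. indicator (A i) \<omega> *\<^sub>R c i)"
    and sbint: "Bochner_Integration.simple_bochner_integral M (\<lambda>\<omega>. indicator (A i) \<omega> *\<^sub>R c i) =
      measure M (A i) *\<^sub>R c i" if "i \<in> I" for i
    using simple_bochner_integral_indicator_scaleR[OF assms(2)[OF that]] by blast+
  have "(\<Sum>i\<in>I. Bochner_Integration.simple_bochner_integral M (\<lambda>\<omega>. indicator (A i) \<omega> *\<^sub>R c i)) =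
      (\<Sum>i\<in>I. measure M (A i) *\<^sub>R c i)"
    using sbint by (rule sum.cong[OF refl])
  with simple_bochner_integral_sum[OF assms(1) sbi] show ?thesis by (simp only:)
qed

end

lemma (in prob_space) AE_in_finite_set_of_law:
  fixes X :: "'a \<Rightarrow> 'b::t1_space"
  assumes X: "X \<in> borel_measurable M" and "finite S" and "measure (distr M borel X) S = 1"
  shows "AE \<omega> in M. X \<omega> \<in> S"
proof -
  have S: "S \<in> sets borel"
    using \<open>finite S\<close> by (intro borel_closed finite_imp_closed)
  then have "prob (X -` S \<inter> space M) = 1"
    using assms(3) by (simp add: measure_distr X)
  then show ?thesis
    using prob_eq_1[OF measurable_sets[OF X S]] by (auto elim!: eventually_mono)
qed

lemma (in L2_bounded_linear) vmeas_eq_integral_level_set_density: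
  assumes "atomless M" and "frechet_L2 M (lift M f) X DF" and X[measurable]: "X \<in> borel_measurable M"
    and "finite S" and "AE \<omega> in M. X \<omega> \<in> S" and A: "A \<in> sets M"
  shows "Bochner_Integration.simple_bochner_integrable M
       (\<lambda>\<omega>. indicator A \<omega> *\<^sub>R (\<Sum>a\<in>S. indicator {a} (X \<omega>) *\<^sub>R
          ((1 / measure (distr M borel X) {a}) *\<^sub>R vmeas_push M DF X {a})))
     \<and> Bochner_Integration.simple_bochner_integral M
       (\<lambda>\<omega>. indicator A \<omega> *\<^sub>R (\<Sum>a\<in>S. indicator {a} (X \<omega>) *\<^sub>R
          ((1 / measure (distr M borel X) {a}) *\<^sub>R vmeas_push M DF X {a})))
       = vmeas DF A"
proof -
  define E where "E a = X -` {a} \<inter> space M" for a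
  define c where "c a = (1 / measure M (E a)) *\<^sub>R vmeas DF (E a)" for a
  have E: "E a \<in> sets M" for a
    unfolding E_def by measurable
  have A_E: "A \<inter> X -` {a} = A \<inter> E a" for a
    using sets.sets_into_space[OF A] by (auto simp: E_def)
  have "vmeas DF A = (\<Sum>a\<in>S. measure M (A \<inter> E a) *\<^sub>R c a)"
    using vmeas_eq_sum_level_sets[OF assms] by (simp add: A_E c_def E_def)
  moreover have "(\<lambda>\<omega>. indicator A \<omega> *\<^sub>R (\<Sum>a\<in>S. indicator {a} (X \<omega>) *\<^sub>R
        ((1 / measure (distr M borel X) {a}) *\<^sub>R vmeas_push M DF X {a}))) =
      (\<lambda>\<omega>. \<Sum>a\<in>S. indicator (A \<inter> E a) \<omega> *\<^sub>R c a)"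
    using sets.sets_into_space[OF A]
    by (auto simp: fun_eq_iff scaleR_sum_right measure_distr vmeas_push_def E_def c_def indicator_def)
  ultimately show ?thesis
    using A E \<open>finite S\<close> by (simp only:) (rule simple_bochner_integral_indicator_scaleR_sum; auto)
qed

theorem lemma3p4:
  fixes M :: "('a::polish_space) measure"
    and f :: "('h::{real_inner, complete_space, second_countable_topology}) measure \<Rightarrow>
              ('u::{real_inner, complete_space, second_countable_topology})"
    and X0 :: "'a \<Rightarrow> 'h"
    and N :: nat and x :: "nat \<Rightarrow> 'h" and p :: "nat \<Rightarrow> real"
    and DF :: "('a \<Rightarrow> 'h) \<Rightarrow> 'u"
  assumes "standing_prob_space M"
    and "X0 \<in> L2 M"
    and "inj_on x {..<N}"
    and "\<forall>k<N. p k > 0"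
    and "(\<Sum>k<N. p k) = 1"
    and "\<forall>B\<in>sets borel. measure (distr M borel X0) B = (\<Sum>k\<in>{k. k < N \<and> x k \<in> B}. p k)"
    and "frechet_L2 M (lift M f) X0 DF"
    and "in_Lambda2 M DF"
  shows "\<forall>A\<in>sets M.
     Bochner_Integration.simple_bochner_integrable M
       (\<lambda>\<omega>. indicator A \<omega> *\<^sub>R
          (\<Sum>k<N. indicator {x k} (X0 \<omega>) *\<^sub>R
                    ((1 / measure (distr M borel X0) {x k}) *\<^sub>R vmeas_push M DF X0 {x k})))
     \<and> Bochner_Integration.simple_bochner_integral M
       (\<lambda>\<omega>. indicator A \<omega> *\<^sub>R
          (\<Sum>k<N. indicator {x k} (X0 \<omega>) *\<^sub>R
                    ((1 / measure (distr M borel X0) {x k}) *\<^sub>R vmeas_push M DF X0 {x k})))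
       = vmeas DF A"
proof -
  have "prob_space M" and "atomless M"
    using assms(1) unfolding standing_prob_space_def atomless_def by auto
  interpret prob_space M by fact
  obtain C where "L2_bounded_linear M DF C"
    using frechet_L2_imp_L2_bounded_linear[OF finite_measure_axioms assms(7)] by blast
  interpret L2_bounded_linear M DF C by fact
  have X0: "X0 \<in> borel_measurable M"
    using assms(2) by (simp add: L2_def)
  have "{k. k < N \<and> x k \<in> x ` {..<N}} = {..<N}"
    by auto
  then have "measure (distr M borel X0) (x ` {..<N}) = 1"
    using assms(5) assms(6)[rule_format, OF borel_closed[OF finite_imp_closed]] by simp
  then have "AE \<omega> in M. X0 \<omega> \<in> x ` {..<N}"
    by (intro AE_in_finite_set_of_law X0) auto
  from vmeas_eq_integral_level_set_density[OF \<open>atomless M\<close> assms(7) X0 _ this] show ?thesis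
    unfolding sum.reindex[OF assms(3)] o_def by blast
qed

end
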